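(* Let $n\ge 2$ and let $\Psi^{(1)},\dots,\Psi^{(t)}$ be $t$ mutually orthogonal quantum Latin squares of order $n$. Then $t\le n-1$. Moreover, if $t=n-1$, then this set of MOQLS is classical.
   Context: A quantum Latin square (QLS) of order $n$ is an $n\times n$ matrix $\Psi=(\psi_{ij})_{1\le i,j\le n}$ whose entries are unit vectors in $\mathbb C^n$ such that the entries of each row and the entries of each column form an orthonormal basis of $\mathbb C^n$. Two QLS $\Psi=(\psi_{ij})$ and $\Phi=(\phi_{ij})$ of order $n$ are orthogonal if $\{\psi_{ij}\otimes\phi_{ij}: 1\le i,j\le n\}$ is an orthonormal basis of $\mathbb C^n\otimes\mathbb C^n$. A set of $t$ mutually orthogonal quantum Latin squares of order $n$ ($t$ MOQLS$(n)$) is a set of $t$ QLS of order $n$ that are pairwise orthogonal. Fix the standard orthonormal basis $\ket{1},\dots,\ket{n}$ of $\mathbb C^n$. Two sets of $t$ MOQLS$(n)$ are isotopic if one can be obtained from the other by a sequence of the operations: (i) multiplying individual entries by phase factors (complex numbers of modulus $1$); (ii) permuting the rows, and permuting the columns, simultaneously in all $t$ squares; (iii) for each square separately, applying one unitary transformation of $\mathbb C^n$ to all entries of that square. A set of $t$ MOQLS$(n)$ is classical if it is isotopic to a set of $t$ MOQLS$(n)$ all of whose entries lie in $\{\ket{1},\dots,\ket{n}\}$. *)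

theory Defs
  imports "HOL-Analysis.Analysis"
begin

text \<open>Vectors of C^n are modelled as complex^'n, where the finite type 'n has
  CARD('n) = n elements; rows and columns of an n x n square are indexed by 'n.
  The standard basis vector |k> is axis k 1.\<close>

definition cinner :: "complex^'n \<Rightarrow> complex^'n \<Rightarrow> complex" where
  "cinner x y = (\<Sum>k\<in>UNIV. cnj (x $ k) * y $ k)"

definition orthonormal_basis :: "'i set \<Rightarrow> ('i \<Rightarrow> complex^'n) \<Rightarrow> bool" where
  "orthonormal_basis I v \<longleftrightarrow>
     finite I \<and>
     (\<forall>i\<in>I. \<forall>j\<in>I. cinner (v i) (v j) = (if i = j then 1 else 0)) \<and>
     (\<forall>x::complex^'n. \<exists>c::'i \<Rightarrow> complex. x = (\<chi> k. \<Sum>i\<in>I. c i * v i $ k))"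

definition tensor :: "complex^'n \<Rightarrow> complex^'n \<Rightarrow> complex^('n \<times> 'n)" where
  "tensor x y = (\<chi> p. x $ fst p * y $ snd p)"

definition QLS :: "('n::finite \<Rightarrow> 'n \<Rightarrow> complex^'n) \<Rightarrow> bool" where
  "QLS P \<longleftrightarrow> (\<forall>i. orthonormal_basis UNIV (\<lambda>j. P i j)) \<and>
             (\<forall>j. orthonormal_basis UNIV (\<lambda>i. P i j))"

definition orthogonal_QLS :: "('n::finite \<Rightarrow> 'n \<Rightarrow> complex^'n) \<Rightarrow> ('n \<Rightarrow> 'n \<Rightarrow> complex^'n) \<Rightarrow> bool" where
  "orthogonal_QLS P Q \<longleftrightarrow> orthonormal_basis UNIV (\<lambda>(i,j). tensor (P i j) (Q i j))"

definition MOQLS :: "nat \<Rightarrow> (nat \<Rightarrow> 'n::finite \<Rightarrow> 'n \<Rightarrow> complex^'n) \<Rightarrow> bool" where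
  "MOQLS t M \<longleftrightarrow> (\<forall>k<t. QLS (M k)) \<and>
     (\<forall>k<t. \<forall>l<t. k \<noteq> l \<longrightarrow> orthogonal_QLS (M k) (M l))"

definition cadj :: "complex^'n^'n \<Rightarrow> complex^'n^'n" where
  "cadj U = (\<chi> i j. cnj (U $ j $ i))"

definition cunitary :: "complex^'n^'n \<Rightarrow> bool" where
  "cunitary U \<longleftrightarrow> U ** cadj U = mat 1 \<and> cadj U ** U = mat 1"

definition iso_step :: "nat \<Rightarrow> (nat \<Rightarrow> 'n::finite \<Rightarrow> 'n \<Rightarrow> complex^'n)
                        \<Rightarrow> (nat \<Rightarrow> 'n \<Rightarrow> 'n \<Rightarrow> complex^'n) \<Rightarrow> bool" where
  "iso_step t M M' \<longleftrightarrow>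
     (\<exists>c :: nat \<Rightarrow> 'n \<Rightarrow> 'n \<Rightarrow> complex. (\<forall>k<t. \<forall>i j. norm (c k i j) = 1) \<and>
         (\<forall>k<t. \<forall>i j. M' k i j = c k i j *s M k i j)) \<or>
     (\<exists>\<sigma> \<tau> :: 'n \<Rightarrow> 'n. bij \<sigma> \<and> bij \<tau> \<and>
         (\<forall>k<t. \<forall>i j. M' k i j = M k (\<sigma> i) (\<tau> j))) \<or>
     (\<exists>U :: nat \<Rightarrow> complex^'n^'n. (\<forall>k<t. cunitary (U k)) \<and>
         (\<forall>k<t. \<forall>i j. M' k i j = U k *v M k i j))"

definition isotopic :: "nat \<Rightarrow> (nat \<Rightarrow> 'n::finite \<Rightarrow> 'n \<Rightarrow> complex^'n)
                        \<Rightarrow> (nat \<Rightarrow> 'n \<Rightarrow> 'n \<Rightarrow> complex^'n) \<Rightarrow> bool" where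
  "isotopic t = (iso_step t)\<^sup>*\<^sup>*"

definition classical_MOQLS :: "nat \<Rightarrow> (nat \<Rightarrow> 'n::finite \<Rightarrow> 'n \<Rightarrow> complex^'n) \<Rightarrow> bool" where
  "classical_MOQLS t M \<longleftrightarrow>
     (\<exists>N. MOQLS t N \<and> isotopic t M N \<and>
          (\<forall>k<t. \<forall>i j. \<exists>a. N k i j = axis a 1))"

end

theory Submission imports Defs begin

text \<open>Fix an entry (i1, j1) and, for each square k, the weights
  g_k(i, j) = |<\<psi>_k(i1, j1), \<psi>_k(i, j)>|^2 on the (n-1)^2 cells outside row i1 and column j1.
  By Parseval along the rows, and since g_k vanishes on column j1, each g_k has total weight n - 1
  there. Orthogonality of squares k \<noteq> l says g_k g_l = 0 on these cells, so at every cell at most one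
  of the weights, each \<le> 1, is nonzero. Hence t(n-1) \<le> (n-1)^2. If t = n - 1 the bound is attained,
  so every weight is 0 or 1: all entries of a square are, up to phase, vectors of a single row.
  Labelling each entry by that row vector turns the squares into n - 1 classical MOLS, and the unitary
  mapping the row to the standard basis, followed by phase changes, is the required isotopy.\<close>

lemma cinner_commute: "cinner y x = cnj (cinner x y)"
  unfolding cinner_def by (simp add: mult.commute)

lemma cmod_cinner_commute: "cmod (cinner x y) = cmod (cinner y x)"
  by (metis cinner_commute complex_mod_cnj)

lemma cinner_sum_right:
  "cinner x (\<chi> k. \<Sum>i\<in>I. c i * v i $ k) = (\<Sum>i\<in>I. c i * cinner x (v i))"
  unfolding cinner_def by (simp add: sum_distrib_left sum.swap[of _ UNIV] algebra_simps)

lemma cinner_scale: "cinner (a *s x) (b *s y) = cnj a * b * cinner x y"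
  unfolding cinner_def by (simp add: sum_distrib_left algebra_simps)

lemma cinner_tensor: "cinner (tensor a b) (tensor c d) = cinner a c * cinner b d"
  unfolding cinner_def tensor_def
  by (simp add: sum_product UNIV_Times_UNIV[symmetric] sum.cartesian_product algebra_simps
      case_prod_beta del: UNIV_Times_UNIV)

lemma cinner_axis: "cinner (axis a (1::complex)) (axis b 1) = (if a = b then 1 else 0)"
proof -
  have "(\<Sum>k\<in>UNIV. cnj (axis a (1::complex) $ k) * axis b 1 $ k)
        = (\<Sum>k\<in>UNIV. if k = a then (if a = b then 1 else 0) else 0)"
    by (rule sum.cong) (auto simp: axis_def)
  then show ?thesis
    unfolding cinner_def by simp
qed

lemma tensor_axis: "tensor (axis a (1::complex)) (axis b 1) = axis (a, b) 1"
  unfolding tensor_def axis_def by (simp add: vec_eq_iff)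

lemma orthonormal_basisD:
  "orthonormal_basis I v \<Longrightarrow> i \<in> I \<Longrightarrow> j \<in> I \<Longrightarrow> cinner (v i) (v j) = (if i = j then 1 else 0)"
  unfolding orthonormal_basis_def by blast

lemma orthonormal_basis_expansion:
  assumes "orthonormal_basis I v"
  shows "x = (\<chi> k. \<Sum>i\<in>I. cinner (v i) x * v i $ k)"
proof -
  obtain c where c: "x = (\<chi> k. \<Sum>i\<in>I. c i * v i $ k)"
    using assms unfolding orthonormal_basis_def by blast
  have "cinner (v j) x = c j" if "j \<in> I" for j
  proof -
    have "cinner (v j) x = (\<Sum>i\<in>I. c i * cinner (v j) (v i))"
      unfolding c by (rule cinner_sum_right)
    also have "\<dots> = (\<Sum>i\<in>I. if j = i then c i else 0)"
      using orthonormal_basisD[OF assms that] by (intro sum.cong) auto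
    also have "\<dots> = c j"
      using assms that unfolding orthonormal_basis_def by simp
    finally show ?thesis .
  qed
  then show ?thesis
    by (subst c) (simp add: c[symmetric])
qed

lemma orthonormal_basis_parseval:
  assumes "orthonormal_basis I v"
  shows "cinner x x = of_real (\<Sum>i\<in>I. (cmod (cinner (v i) x))^2)"
proof -
  have "cinner x x = cinner x (\<chi> k. \<Sum>i\<in>I. cinner (v i) x * v i $ k)"
    using orthonormal_basis_expansion[OF assms, of x] by simp
  also have "\<dots> = (\<Sum>i\<in>I. cinner (v i) x * cinner x (v i))"
    by (rule cinner_sum_right)
  also have "\<dots> = (\<Sum>i\<in>I. of_real ((cmod (cinner (v i) x))^2))"
    by (intro sum.cong refl) (metis cinner_commute complex_norm_square)
  finally show ?thesis by simp
qed

lemma orthonormal_basis_parseval_unit: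
  assumes "orthonormal_basis I v" "cinner x x = 1"
  shows "(\<Sum>i\<in>I. (cmod (cinner (v i) x))^2) = 1"
  using orthonormal_basis_parseval[OF assms(1), of x] assms(2) by (metis of_real_eq_1_iff)

lemma orthonormal_basis_collinear:
  assumes ob: "orthonormal_basis I v" and "a \<in> I" and "cinner x x = 1"
    and "cmod (cinner (v a) x) = 1"
  shows "x = cinner (v a) x *s v a"
proof -
  have fin: "finite I" using ob unfolding orthonormal_basis_def by blast
  have "(\<Sum>i\<in>I - {a}. (cmod (cinner (v i) x))^2) = 0"
    using orthonormal_basis_parseval_unit[OF ob \<open>cinner x x = 1\<close>] assms(2,4) fin
    by (simp add: sum.remove)
  then have "cinner (v i) x = 0" if "i \<in> I - {a}" for i
    using that fin by (subst (asm) sum_nonneg_eq_0_iff) auto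
  then have "(\<Sum>i\<in>I. cinner (v i) x * v i $ k) = cinner (v a) x * v a $ k" for k
    using fin assms(2) by (simp add: sum.remove sum.neutral)
  then show ?thesis
    by (subst orthonormal_basis_expansion[OF ob]) (simp add: vec_eq_iff)
qed

lemma orthonormal_basis_axis:
  fixes f :: "'i \<Rightarrow> 'm::finite"
  assumes "finite (UNIV :: 'i set)" and "bij f"
  shows "orthonormal_basis UNIV (\<lambda>i. axis (f i) (1::complex))"
  unfolding orthonormal_basis_def
proof (intro conjI ballI allI)
  fix i j
  show "cinner (axis (f i) 1) (axis (f j) 1) = (if i = j then 1 else 0)"
    using bij_is_inj[OF assms(2)] by (simp add: cinner_axis inj_eq)
next
  fix x :: "complex^'m"
  have "(\<Sum>i\<in>UNIV. x $ f i * axis (f i) 1 $ k) = x $ k" for k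
    using sum.reindex_bij_betw[OF assms(2), of "\<lambda>m. x $ m * axis m 1 $ k"]
    by (simp add: axis_def if_distrib cong: if_cong)
  then show "\<exists>c. x = (\<chi> k. \<Sum>i\<in>UNIV. c i * axis (f i) 1 $ k)"
    by (intro exI[of _ "\<lambda>i. x $ f i"]) (simp add: vec_eq_iff)
qed (use assms(1) in simp)

lemma cunitary_conj_rows:
  fixes e :: "'n::finite \<Rightarrow> complex^'n"
  assumes "orthonormal_basis UNIV e"
  shows "cunitary (\<chi> a m. cnj (e a $ m))"
proof -
  have "(\<chi> a m. cnj (e a $ m)) ** cadj (\<chi> a m. cnj (e a $ m)) = mat 1"
    using orthonormal_basisD[OF assms]
    by (simp add: vec_eq_iff matrix_matrix_mult_def cadj_def mat_def cinner_def)
  then show ?thesis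
    unfolding cunitary_def using matrix_left_right_inverse by blast
qed

lemma conj_rows_mult_basis_vector:
  fixes e :: "'n::finite \<Rightarrow> complex^'n"
  assumes "orthonormal_basis UNIV e"
  shows "(\<chi> b m. cnj (e b $ m)) *v e a = axis a 1"
proof -
  have "(\<chi> b m. cnj (e b $ m)) *v e a = (\<chi> b. cinner (e b) (e a))"
    unfolding cinner_def by (simp add: matrix_vector_mult_def)
  then show ?thesis
    using orthonormal_basisD[OF assms] by (simp add: vec_eq_iff axis_def)
qed

lemma sum_le_1_if_products_zero:
  fixes f :: "'a \<Rightarrow> real"
  assumes "finite K" and "\<forall>k\<in>K. 0 \<le> f k \<and> f k \<le> 1"
    and "\<forall>k\<in>K. \<forall>l\<in>K. k \<noteq> l \<longrightarrow> f k * f l = 0"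
  shows "sum f K \<le> 1 \<and> (sum f K = 1 \<longrightarrow> (\<forall>k\<in>K. f k = 0 \<or> f k = 1))"
proof (cases "\<exists>k\<in>K. f k \<noteq> 0")
  case True
  then obtain k where k: "k \<in> K" "f k \<noteq> 0" by blast
  then have "\<forall>l\<in>K - {k}. f l = 0" using assms(3) by auto
  then have "sum f K = f k"
    using assms(1) k(1) by (simp add: sum.remove sum.neutral)
  then show ?thesis
    using assms(2) \<open>\<forall>l\<in>K - {k}. f l = 0\<close> k by auto
qed simp

lemma sum_sum_le_card_if_products_zero:
  fixes g :: "'b \<Rightarrow> 'a \<Rightarrow> real"
  assumes "finite D" and "finite K" and "\<forall>k\<in>K. \<forall>y\<in>D. 0 \<le> g k y \<and> g k y \<le> 1"
    and "\<forall>y\<in>D. \<forall>k\<in>K. \<forall>l\<in>K. k \<noteq> l \<longrightarrow> g k y * g l y = 0"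
  shows "(\<Sum>k\<in>K. \<Sum>y\<in>D. g k y) \<le> card D"
    and "(\<Sum>k\<in>K. \<Sum>y\<in>D. g k y) = card D \<Longrightarrow> k \<in> K \<Longrightarrow> y \<in> D \<Longrightarrow> g k y = 0 \<or> g k y = 1"
proof -
  have pointwise: "(\<Sum>k\<in>K. g k y) \<le> 1 \<and> ((\<Sum>k\<in>K. g k y) = 1 \<longrightarrow> (\<forall>k\<in>K. g k y = 0 \<or> g k y = 1))"
    if "y \<in> D" for y
    using sum_le_1_if_products_zero[OF assms(2), of "\<lambda>k. g k y"] assms(3,4) that by blast
  have swap: "(\<Sum>k\<in>K. \<Sum>y\<in>D. g k y) = card D - (\<Sum>y\<in>D. 1 - (\<Sum>k\<in>K. g k y))"
    by (simp add: sum.swap[of _ K] sum_subtractf)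
  have defect_nonneg: "\<forall>y\<in>D. 0 \<le> 1 - (\<Sum>k\<in>K. g k y)"
    using pointwise by simp
  then show "(\<Sum>k\<in>K. \<Sum>y\<in>D. g k y) \<le> card D"
    unfolding swap by (simp add: sum_nonneg)
  assume "(\<Sum>k\<in>K. \<Sum>y\<in>D. g k y) = card D" "k \<in> K" "y \<in> D"
  then have "(\<Sum>y\<in>D. 1 - (\<Sum>k\<in>K. g k y)) = 0"
    unfolding swap by simp
  then have "1 - (\<Sum>k\<in>K. g k y) = 0"
    using sum_nonneg_0[OF assms(1), of "\<lambda>y. 1 - (\<Sum>k\<in>K. g k y)" y] defect_nonneg \<open>y \<in> D\<close>
    by blast
  then show "g k y = 0 \<or> g k y = 1"
    using pointwise \<open>k \<in> K\<close> \<open>y \<in> D\<close> by auto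
qed

lemma MOQLS_row: "MOQLS t M \<Longrightarrow> k < t \<Longrightarrow> orthonormal_basis UNIV (\<lambda>j. M k i j)"
  unfolding MOQLS_def QLS_def by blast

lemma MOQLS_col: "MOQLS t M \<Longrightarrow> k < t \<Longrightarrow> orthonormal_basis UNIV (\<lambda>i. M k i j)"
  unfolding MOQLS_def QLS_def by blast

lemma MOQLS_unit: "MOQLS t M \<Longrightarrow> k < t \<Longrightarrow> cinner (M k i j) (M k i j) = 1"
  using orthonormal_basisD[OF MOQLS_row] by fastforce

lemma MOQLS_row_orth: "MOQLS t M \<Longrightarrow> k < t \<Longrightarrow> j \<noteq> j' \<Longrightarrow> cinner (M k i j) (M k i j') = 0"
  using orthonormal_basisD[OF MOQLS_row] by fastforce

lemma MOQLS_col_orth: "MOQLS t M \<Longrightarrow> k < t \<Longrightarrow> i \<noteq> i' \<Longrightarrow> cinner (M k i j) (M k i' j) = 0"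
  using orthonormal_basisD[OF MOQLS_col] by fastforce

lemma MOQLS_orth:
  assumes "MOQLS t M" "k < t" "l < t" "k \<noteq> l" "(i, j) \<noteq> (i', j')"
  shows "cinner (M k i j) (M k i' j') * cinner (M l i j) (M l i' j') = 0"
proof -
  have "orthonormal_basis UNIV (\<lambda>(i, j). tensor (M k i j) (M l i j))"
    using assms(1-4) unfolding MOQLS_def orthogonal_QLS_def by blast
  from orthonormal_basisD[OF this, of "(i, j)" "(i', j')"] show ?thesis
    using assms(5) by (simp add: cinner_tensor)
qed

lemma MOQLS_row_parseval:
  assumes "MOQLS t M" "k < t"
  shows "(\<Sum>j\<in>UNIV. (cmod (cinner (M k i' j') (M k i j)))^2) = 1"
  using orthonormal_basis_parseval_unit[OF MOQLS_row[OF assms] MOQLS_unit[OF assms]]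
  by (simp only: cmod_cinner_commute[of "M k i' j'"])

lemma MOQLS_overlap_sum:
  fixes M :: "nat \<Rightarrow> 'n::finite \<Rightarrow> 'n \<Rightarrow> complex^'n"
  assumes MO: "MOQLS t M" and k: "k < t" and n2: "CARD('n) \<ge> 2"
  shows "(\<Sum>(i, j)\<in>(UNIV - {i1}) \<times> (UNIV - {j1}). (cmod (cinner (M k i1 j1) (M k i j)))^2)
           = real CARD('n) - 1"
proof -
  let ?g = "\<lambda>i j. (cmod (cinner (M k i1 j1) (M k i j)))^2"
  have row: "(\<Sum>j\<in>UNIV - {j1}. ?g i j) = 1" if "i \<noteq> i1" for i
  proof -
    have "(\<Sum>j\<in>UNIV. ?g i j) = 1"
      by (rule MOQLS_row_parseval[OF MO k])
    moreover have "?g i j1 = 0"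
      using MOQLS_col_orth[OF MO k] that by simp
    ultimately show ?thesis
      by (simp add: sum.remove[of UNIV j1])
  qed
  have "(\<Sum>(i, j)\<in>(UNIV - {i1}) \<times> (UNIV - {j1}). ?g i j) = (\<Sum>i\<in>UNIV - {i1}. 1)"
    using row by (simp add: sum.cartesian_product[symmetric])
  also have "\<dots> = real CARD('n) - 1"
    using n2 by (simp add: card_Diff_singleton of_nat_diff)
  finally show ?thesis .
qed

lemma MOQLS_bound:
  fixes M :: "nat \<Rightarrow> 'n::finite \<Rightarrow> 'n \<Rightarrow> complex^'n"
  assumes MO: "MOQLS t M" and n2: "CARD('n) \<ge> 2"
  shows "t \<le> CARD('n) - 1"
    and "t = CARD('n) - 1 \<Longrightarrow> k < t \<Longrightarrow> cmod (cinner (M k i1 j1) (M k i j)) \<in> {0, 1}"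
proof -
  define D where "D = (UNIV - {i1}) \<times> (UNIV - {j1})"
  define g where "g k y = (cmod (cinner (M k i1 j1) (M k (fst y) (snd y))))^2" for k y
  have card_D: "card D = (real CARD('n) - 1)^2"
    using n2 unfolding D_def
    by (simp add: card_cartesian_product card_Diff_singleton of_nat_diff power2_eq_square)
  have total: "(\<Sum>k<t. \<Sum>y\<in>D. g k y) = real t * (real CARD('n) - 1)"
    using MOQLS_overlap_sum[OF MO _ n2] unfolding D_def g_def by (simp add: case_prod_beta)
  have "g k y \<le> 1" if "k < t" for k y
    using member_le_sum[of "snd y" UNIV "\<lambda>j. (cmod (cinner (M k i1 j1) (M k (fst y) j)))^2"]
      MOQLS_row_parseval[OF MO that]
    unfolding g_def by simp
  then have range: "\<forall>k\<in>{..<t}. \<forall>y\<in>D. 0 \<le> g k y \<and> g k y \<le> 1"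
    unfolding g_def by simp
  have "g k y * g l y = 0" if "y \<in> D" "k < t" "l < t" "k \<noteq> l" for k l y
    using MOQLS_orth[OF MO that(2-4), of i1 j1 "fst y" "snd y"] that(1)
    unfolding g_def D_def by (auto simp: power_mult_distrib[symmetric] norm_mult[symmetric])
  then have products_zero: "\<forall>y\<in>D. \<forall>k\<in>{..<t}. \<forall>l\<in>{..<t}. k \<noteq> l \<longrightarrow> g k y * g l y = 0"
    by blast
  note bound = sum_sum_le_card_if_products_zero[OF _ finite_lessThan range products_zero]
  have "real t * (real CARD('n) - 1) \<le> (real CARD('n) - 1) * (real CARD('n) - 1)"
    using bound(1) total card_D unfolding D_def by (simp add: power2_eq_square)
  then show "t \<le> CARD('n) - 1"
    using n2 by (simp add: mult_le_cancel_right)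
  assume t: "t = CARD('n) - 1" and k: "k < t"
  show "cmod (cinner (M k i1 j1) (M k i j)) \<in> {0, 1}"
  proof (cases "i = i1 \<or> j = j1")
    case True
    then show ?thesis
      using MOQLS_unit[OF MO k] MOQLS_row_orth[OF MO k] MOQLS_col_orth[OF MO k]
      by (cases "i = i1"; cases "j = j1") auto
  next
    case False
    have "(\<Sum>k<t. \<Sum>y\<in>D. g k y) = card D"
      using total card_D t n2 by (simp add: of_nat_diff power2_eq_square)
    then have "g k (i, j) = 0 \<or> g k (i, j) = 1"
      using bound(2) k False unfolding D_def by simp
    then show ?thesis
      unfolding g_def using norm_ge_zero[of "cinner (M k i1 j1) (M k i j)"]
      by (auto simp: power2_eq_1_iff)
  qed
qed

lemma MOQLS_axis:
  fixes L :: "nat \<Rightarrow> 'n::finite \<Rightarrow> 'n \<Rightarrow> 'n"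
  assumes rows: "\<And>k i. k < t \<Longrightarrow> inj (L k i)"
    and cols: "\<And>k j. k < t \<Longrightarrow> inj (\<lambda>i. L k i j)"
    and orth: "\<And>k l. k < t \<Longrightarrow> l < t \<Longrightarrow> k \<noteq> l \<Longrightarrow> inj (\<lambda>(i, j). (L k i j, L l i j))"
  shows "MOQLS t (\<lambda>k i j. axis (L k i j) (1::complex))"
proof -
  have "orthogonal_QLS (\<lambda>i j. axis (L k i j) 1) (\<lambda>i j. axis (L l i j) (1::complex))"
    if "k < t" "l < t" "k \<noteq> l" for k l
  proof -
    have "(\<lambda>(i, j). tensor (axis (L k i j) 1) (axis (L l i j) (1::complex)))
          = (\<lambda>p. axis ((\<lambda>(i, j). (L k i j, L l i j)) p) 1)"
      by (auto simp: tensor_axis)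
    then show ?thesis
      unfolding orthogonal_QLS_def
      using orthonormal_basis_axis[of "\<lambda>(i, j). (L k i j, L l i j)"] orth[OF that]
      by (simp add: bij_def finite_UNIV_inj_surj)
  qed
  moreover have "QLS (\<lambda>i j. axis (L k i j) (1::complex))" if "k < t" for k
    unfolding QLS_def
  proof (intro conjI allI)
    show "orthonormal_basis UNIV (\<lambda>j. axis (L k i j) (1::complex))" for i
      using orthonormal_basis_axis[of "L k i"] rows[OF that]
      by (simp add: bij_def finite_UNIV_inj_surj)
    show "orthonormal_basis UNIV (\<lambda>i. axis (L k i j) (1::complex))" for j
      using orthonormal_basis_axis[of "\<lambda>i. L k i j"] cols[OF that]
      by (simp add: bij_def finite_UNIV_inj_surj)
  qed
  ultimately show ?thesis
    unfolding MOQLS_def by blast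
qed

lemma isotopic_unitary_then_phases:
  assumes "\<And>k. k < t \<Longrightarrow> cunitary (U k)" and "\<And>k i j. k < t \<Longrightarrow> norm (c k i j) = 1"
    and "\<And>k i j. k < t \<Longrightarrow> N k i j = c k i j *s (U k *v M k i j)"
  shows "isotopic t M N"
proof -
  have "iso_step t M (\<lambda>k i j. U k *v M k i j)"
    unfolding iso_step_def using assms(1) by blast
  moreover have "iso_step t (\<lambda>k i j. U k *v M k i j) N"
    unfolding iso_step_def using assms(2,3) by blast
  ultimately show ?thesis
    unfolding isotopic_def by (meson rtranclp.rtrancl_into_rtrancl r_into_rtranclp)
qed

lemma MOQLS_row_labelling:
  fixes M :: "nat \<Rightarrow> 'n::finite \<Rightarrow> 'n \<Rightarrow> complex^'n"
  assumes MO: "MOQLS t M"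
    and overlaps: "\<And>k i j a. k < t \<Longrightarrow> cmod (cinner (M k i0 a) (M k i j)) \<in> {0, 1}"
  shows "\<exists>L ph. \<forall>k<t. \<forall>i j. cmod (ph k i j) = 1 \<and> M k i j = ph k i j *s M k i0 (L k i j)"
proof -
  have "\<exists>a c. cmod c = 1 \<and> M k i j = c *s M k i0 a" if k: "k < t" for k i j
  proof -
    have "(\<Sum>a\<in>UNIV. (cmod (cinner (M k i0 a) (M k i j)))^2) = 1"
      by (rule orthonormal_basis_parseval_unit[OF MOQLS_row[OF MO k] MOQLS_unit[OF MO k]])
    then obtain a where "cmod (cinner (M k i0 a) (M k i j)) \<noteq> 0"
      by (metis (no_types, lifting) sum.neutral zero_neq_one zero_power2)
    then have "cmod (cinner (M k i0 a) (M k i j)) = 1"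
      using overlaps[OF k] by blast
    then show ?thesis
      using orthonormal_basis_collinear[OF MOQLS_row[OF MO k] _ MOQLS_unit[OF MO k]] by blast
  qed
  then show ?thesis
    by metis
qed

text \<open>Entries with equal labels have overlap of modulus 1, so the orthogonality relations of the
  quantum squares force the labels to form mutually orthogonal Latin squares.\<close>

lemma MOQLS_axis_of_labelling:
  fixes M :: "nat \<Rightarrow> 'n::finite \<Rightarrow> 'n \<Rightarrow> complex^'n"
  assumes MO: "MOQLS t M"
    and rep: "\<And>k i j. k < t \<Longrightarrow> cmod (ph k i j) = 1 \<and> M k i j = ph k i j *s M k i0 (L k i j)"
  shows "MOQLS t (\<lambda>k i j. axis (L k i j) (1::complex))"
proof (rule MOQLS_axis)
  have same_label: "cinner (M k i j) (M k i' j') \<noteq> 0"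
    if k: "k < t" and "L k i j = L k i' j'" for k i j i' j'
  proof -
    have "cinner (M k i j) (M k i' j') = cnj (ph k i j) * ph k i' j'"
      using rep[OF k, of i j] rep[OF k, of i' j'] orthonormal_basisD[OF MOQLS_row[OF MO k]] that(2)
      by (simp add: cinner_scale)
    then show ?thesis
      using rep[OF k, of i j] rep[OF k, of i' j'] by auto
  qed
  show "inj (L k i)" if "k < t" for k i
    using same_label[OF that] MOQLS_row_orth[OF MO that] by (metis injI)
  show "inj (\<lambda>i. L k i j)" if "k < t" for k j
    using same_label[OF that] MOQLS_col_orth[OF MO that] by (metis injI)
  show "inj (\<lambda>(i, j). (L k i j, L l i j))" if "k < t" "l < t" "k \<noteq> l" for k l
    using same_label[OF that(1)] same_label[OF that(2)] MOQLS_orth[OF MO that]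
    by (intro injI) (fastforce simp: mult_eq_0_iff)
qed

lemma MOQLS_classical_if_row_overlaps_0_1:
  fixes M :: "nat \<Rightarrow> 'n::finite \<Rightarrow> 'n \<Rightarrow> complex^'n"
  assumes MO: "MOQLS t M"
    and overlaps: "\<And>k i j a. k < t \<Longrightarrow> cmod (cinner (M k i0 a) (M k i j)) \<in> {0, 1}"
  shows "classical_MOQLS t M"
proof -
  obtain L ph where rep:
    "\<And>k i j. k < t \<Longrightarrow> cmod (ph k i j) = 1 \<and> M k i j = ph k i j *s M k i0 (L k i j)"
    using MOQLS_row_labelling[OF MO overlaps] by blast
  define U where "U k = (\<chi> b m. cnj (M k i0 b $ m))" for k
  have "isotopic t M (\<lambda>k i j. axis (L k i j) 1)"
  proof (rule isotopic_unitary_then_phases[of t U "\<lambda>k i j. cnj (ph k i j)"])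
    show "cunitary (U k)" if "k < t" for k
      unfolding U_def by (rule cunitary_conj_rows[OF MOQLS_row[OF MO that]])
    show "norm (cnj (ph k i j)) = 1" if "k < t" for k i j
      using rep[OF that] by simp
    show "axis (L k i j) 1 = cnj (ph k i j) *s (U k *v M k i j)" if k: "k < t" for k i j
    proof -
      have "cnj (ph k i j) * ph k i j = 1"
        using rep[OF k, of i j] by (metis complex_norm_square mult.commute of_real_1 power_one)
      then show ?thesis
        using rep[OF k, of i j] conj_rows_mult_basis_vector[OF MOQLS_row[OF MO k]]
        unfolding U_def by (simp add: vector_scalar_commute vector_smult_assoc)
    qed
  qed
  moreover have "MOQLS t (\<lambda>k i j. axis (L k i j) (1::complex))"
    by (rule MOQLS_axis_of_labelling[OF MO, of ph i0 L, OF rep])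
  ultimately show ?thesis
    unfolding classical_MOQLS_def by blast
qed

theorem mainTheorem2:
  fixes M :: "nat \<Rightarrow> 'n::finite \<Rightarrow> 'n \<Rightarrow> complex^'n" and t :: nat
  assumes "CARD('n) \<ge> 2"
    and "MOQLS t M"
  shows "t \<le> CARD('n) - 1 \<and> (t = CARD('n) - 1 \<longrightarrow> classical_MOQLS t M)"
proof -
  have "t \<le> CARD('n) - 1"
    by (rule MOQLS_bound(1)[OF assms(2,1)])
  moreover have "classical_MOQLS t M" if "t = CARD('n) - 1"
    using MOQLS_bound(2)[OF assms(2,1) that]
    by (blast intro: MOQLS_classical_if_row_overlaps_0_1[OF assms(2)])
  ultimately show ?thesis
    by blast
qed

end
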